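(* Fix a subject entity $s$ and a finite set $E$ of candidate events for $s$, and define for $T\subseteq E$ $$\mathrm{Rel}(s,T)=\lambda\,\mathrm{ERel}(s,T)+(1-\lambda)\,\mathrm{DRel}(s,T),$$ where $$\mathrm{ERel}(s,T)=w^e_1\,\mathrm{E2E}(s,T)+w^e_2\,\mathrm{E2EPath}(T)+w^e_3\,\mathrm{G2E}(T),\qquad \mathrm{DRel}(s,T)=w^d_1\,\mathrm{E2D}(s,T)+w^d_2\,\mathrm{E2DPath}(T),$$ with $$\mathrm{E2E}(s,T)=\sum_{re\in\{\mathrm{RE}(e)\,:\,e\in T\}}\mathrm{E2ECooc}(s,re),\qquad \mathrm{G2E}(T)=\sum_{re\in\{\mathrm{RE}(e)\,:\,e\in T\}}\mathrm{GlobalImportance}(re),$$ $$\mathrm{E2EPath}(T)=\sum_{p\in\{\pi_{RE}(e)\,:\,e\in T\}}\ \operatorname*{average}_{e\in\mathcal{E},\ \pi_{RE}(e)=p}\mathrm{E2ECooc}(\mathrm{Sub}(e),\mathrm{RE}(e)),$$ $$\mathrm{E2D}(s,T)=\sum_{t\in\{\tau(e)\,:\,e\in T\}}\mathrm{E2DCooc}(s,t),\qquad \mathrm{E2DPath}(T)=\sum_{p\in\{\pi_{\tau}(e)\,:\,e\in T\}}\ \operatorname*{average}_{e\in\mathcal{E},\ \pi_{\tau}(e)=p}\mathrm{E2DCooc}(\mathrm{Sub}(e),\tau(e)),$$ where $0\le\lambda\le 1$ and $w^e_1,w^e_2,w^e_3,w^d_1,w^d_2\ge 0$. Then $f(T)=\mathrm{Rel}(s,T)$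 is a monotone submodular set function $f:2^E\to\mathbb{R}_{\ge 0}$.
   Context: Events: $\mathcal{E}$ is the (finite) set of all events over all subjects in a knowledge base, and $E\subseteq\mathcal{E}$ is the set of candidate events of the subject $s$. Each event $e$ has a subject $\mathrm{Sub}(e)$ (with $\mathrm{Sub}(e)=s$ for $e\in E$), a related entity $\mathrm{RE}(e)$, a timestamp $\tau(e)\in\mathbb{R}$, an entity path $\pi_{RE}(e)$ and a time path $\pi_\tau(e)$ (labels drawn from some set of path types). The sums range over sets (not multisets), so each distinct related entity, timestamp, or path is counted once. $\mathrm{E2ECooc}(x,y)$ and $\mathrm{E2DCooc}(x,t)$ are nonnegative real-valued co-occurrence scores between entities (resp. an entity and a date) — in the paper, normalized pointwise mutual information computed from web co-occurrence, with only positive values retained — and $\mathrm{GlobalImportance}(re)\ge 0$ is a nonnegative score of an entity (the fraction of search queries mentioning it). A set function $f$ on $2^E$ is submodular if $f(A\cup\{e\})-f(A)\ge f(B\cup\{e\})-f(B)$ for all $A\subseteq B\subseteq E$ and $e\in E\setminus B$, and monotone if $f(A)\le f(B)$ whenever $A\subseteq B$. *)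

theory Defs
  imports "HOL-Analysis.Analysis"
begin

definition average :: "'a set \<Rightarrow> ('a \<Rightarrow> real) \<Rightarrow> real" where
  "average A g = (\<Sum>x\<in>A. g x) / real (card A)"

definition E2E :: "('ent \<Rightarrow> 'ent \<Rightarrow> real) \<Rightarrow> ('ev \<Rightarrow> 'ent) \<Rightarrow> 'ent \<Rightarrow> 'ev set \<Rightarrow> real" where
  "E2E E2ECooc RE s T = (\<Sum>re\<in>RE ` T. E2ECooc s re)"

definition G2E :: "('ent \<Rightarrow> real) \<Rightarrow> ('ev \<Rightarrow> 'ent) \<Rightarrow> 'ev set \<Rightarrow> real" where
  "G2E GI RE T = (\<Sum>re\<in>RE ` T. GI re)"

definition E2EPath :: "'ev set \<Rightarrow> ('ent \<Rightarrow> 'ent \<Rightarrow> real) \<Rightarrow> ('ev \<Rightarrow> 'ent) \<Rightarrow> ('ev \<Rightarrow> 'ent)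
    \<Rightarrow> ('ev \<Rightarrow> 'p) \<Rightarrow> 'ev set \<Rightarrow> real" where
  "E2EPath Ev E2ECooc Sub RE piRE T =
     (\<Sum>p\<in>piRE ` T. average {e\<in>Ev. piRE e = p} (\<lambda>e. E2ECooc (Sub e) (RE e)))"

definition E2D :: "('ent \<Rightarrow> real \<Rightarrow> real) \<Rightarrow> ('ev \<Rightarrow> real) \<Rightarrow> 'ent \<Rightarrow> 'ev set \<Rightarrow> real" where
  "E2D E2DCooc tau s T = (\<Sum>t\<in>tau ` T. E2DCooc s t)"

definition E2DPath :: "'ev set \<Rightarrow> ('ent \<Rightarrow> real \<Rightarrow> real) \<Rightarrow> ('ev \<Rightarrow> 'ent) \<Rightarrow> ('ev \<Rightarrow> real)
    \<Rightarrow> ('ev \<Rightarrow> 'q) \<Rightarrow> 'ev set \<Rightarrow> real" where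
  "E2DPath Ev E2DCooc Sub tau piTau T =
     (\<Sum>p\<in>piTau ` T. average {e\<in>Ev. piTau e = p} (\<lambda>e. E2DCooc (Sub e) (tau e)))"

definition submodular_on :: "'a set \<Rightarrow> ('a set \<Rightarrow> real) \<Rightarrow> bool" where
  "submodular_on E f \<longleftrightarrow>
     (\<forall>A B e. A \<subseteq> B \<and> B \<subseteq> E \<and> e \<in> E - B \<longrightarrow>
        f (A \<union> {e}) - f A \<ge> f (B \<union> {e}) - f B)"

definition monotone_set_fun_on :: "'a set \<Rightarrow> ('a set \<Rightarrow> real) \<Rightarrow> bool" where
  "monotone_set_fun_on E f \<longleftrightarrow> (\<forall>A B. A \<subseteq> B \<and> B \<subseteq> E \<longrightarrow> f A \<le> f B)"

end

theory Submission
  imports Defs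
begin

text \<open>Each of the five relevance terms is a weighted coverage function
  \<open>T \<mapsto> \<Sum>x\<in>g ` T. h x\<close> with \<open>h \<ge> 0\<close>: adding an event \<open>e\<close> gains \<open>h (g e)\<close> if \<open>g e\<close> is not yet
  covered and nothing otherwise, and a larger set covers more. Such functions are nonnegative,
  monotone and submodular, and these three properties are preserved by nonnegative linear
  combinations, of which \<open>Rel\<close> is one.\<close>

definition nonneg_monotone_submodular_on :: "'a set \<Rightarrow> ('a set \<Rightarrow> real) \<Rightarrow> bool" where
  "nonneg_monotone_submodular_on E F \<longleftrightarrow>
     monotone_set_fun_on E F \<and> submodular_on E F \<and> (\<forall>T. T \<subseteq> E \<longrightarrow> F T \<ge> 0)"

lemma nonneg_monotone_submodular_onI:
  assumes "\<And>A B. A \<subseteq> B \<Longrightarrow> B \<subseteq> E \<Longrightarrow> F A \<le> F B"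
    and "\<And>A B e. A \<subseteq> B \<Longrightarrow> B \<subseteq> E \<Longrightarrow> e \<in> E - B \<Longrightarrow>
           F (B \<union> {e}) - F B \<le> F (A \<union> {e}) - F A"
    and "\<And>T. T \<subseteq> E \<Longrightarrow> 0 \<le> F T"
  shows "nonneg_monotone_submodular_on E F"
  unfolding nonneg_monotone_submodular_on_def monotone_set_fun_on_def submodular_on_def
  using assms by blast

lemma nonneg_monotone_submodular_onD:
  assumes "nonneg_monotone_submodular_on E F"
  shows "\<And>A B. A \<subseteq> B \<Longrightarrow> B \<subseteq> E \<Longrightarrow> F A \<le> F B"
    and "\<And>A B e. A \<subseteq> B \<Longrightarrow> B \<subseteq> E \<Longrightarrow> e \<in> E - B \<Longrightarrow>
           F (B \<union> {e}) - F B \<le> F (A \<union> {e}) - F A"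
    and "\<And>T. T \<subseteq> E \<Longrightarrow> 0 \<le> F T"
  using assms
  unfolding nonneg_monotone_submodular_on_def monotone_set_fun_on_def submodular_on_def
  by blast+

lemma nonneg_monotone_submodular_on_scale:
  assumes F: "nonneg_monotone_submodular_on E F" and c: "c \<ge> 0"
  shows "nonneg_monotone_submodular_on E (\<lambda>T. c * F T)"
proof (rule nonneg_monotone_submodular_onI)
  fix A B assume "A \<subseteq> B" "B \<subseteq> E"
  then show "c * F A \<le> c * F B"
    by (rule mult_left_mono[OF nonneg_monotone_submodular_onD(1)[OF F] c])
next
  fix A B e assume "A \<subseteq> B" "B \<subseteq> E" "e \<in> E - B"
  then have "c * (F (B \<union> {e}) - F B) \<le> c * (F (A \<union> {e}) - F A)"
    by (rule mult_left_mono[OF nonneg_monotone_submodular_onD(2)[OF F] c])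
  then show "c * F (B \<union> {e}) - c * F B \<le> c * F (A \<union> {e}) - c * F A"
    by (simp add: right_diff_distrib)
next
  fix T assume "T \<subseteq> E"
  then show "0 \<le> c * F T"
    by (rule mult_nonneg_nonneg[OF c nonneg_monotone_submodular_onD(3)[OF F]])
qed

lemma nonneg_monotone_submodular_on_add:
  assumes F: "nonneg_monotone_submodular_on E F" and G: "nonneg_monotone_submodular_on E G"
  shows "nonneg_monotone_submodular_on E (\<lambda>T. F T + G T)"
  using nonneg_monotone_submodular_onD[OF F] nonneg_monotone_submodular_onD[OF G]
  by (intro nonneg_monotone_submodular_onI) (smt (verit))+

lemma sum_image_insert_gain:
  assumes "finite A"
  shows "(\<Sum>x\<in>g ` (A \<union> {e}). h x) - (\<Sum>x\<in>g ` A. h x) =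
           (if g e \<in> g ` A then 0 else (h (g e) :: real))"
  using assms by (simp add: insert_absorb)

lemma coverage_nonneg_monotone_submodular_on:
  assumes E: "finite E" and h: "\<And>x. h x \<ge> (0::real)"
  shows "nonneg_monotone_submodular_on E (\<lambda>T. \<Sum>x\<in>g ` T. h x)"
proof (rule nonneg_monotone_submodular_onI)
  fix A B assume "A \<subseteq> B" "B \<subseteq> E"
  with E show "(\<Sum>x\<in>g ` A. h x) \<le> (\<Sum>x\<in>g ` B. h x)"
    by (intro sum_mono2) (auto intro: finite_subset h)
next
  fix A B e assume AB: "A \<subseteq> B" "B \<subseteq> E"
  with E have A: "finite A" and B: "finite B" by (auto intro: finite_subset)
  from AB h show "(\<Sum>x\<in>g ` (B \<union> {e}). h x) - (\<Sum>x\<in>g ` B. h x)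
      \<le> (\<Sum>x\<in>g ` (A \<union> {e}). h x) - (\<Sum>x\<in>g ` A. h x)"
    unfolding sum_image_insert_gain[OF A] sum_image_insert_gain[OF B] by auto
next
  fix T show "0 \<le> (\<Sum>x\<in>g ` T. h x)" by (rule sum_nonneg[OF h])
qed

lemma average_nonneg: "(\<And>x. k x \<ge> 0) \<Longrightarrow> average A k \<ge> 0"
  unfolding average_def by (simp add: sum_nonneg)

lemma E2E_nonneg_monotone_submodular_on:
  "finite E \<Longrightarrow> (\<And>x y. E2ECooc x y \<ge> 0) \<Longrightarrow>
     nonneg_monotone_submodular_on E (E2E E2ECooc RE s)"
  unfolding E2E_def by (rule coverage_nonneg_monotone_submodular_on)

lemma G2E_nonneg_monotone_submodular_on:
  "finite E \<Longrightarrow> (\<And>x. GI x \<ge> 0) \<Longrightarrow> nonneg_monotone_submodular_on E (G2E GI RE)"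
  unfolding G2E_def by (rule coverage_nonneg_monotone_submodular_on)

lemma E2D_nonneg_monotone_submodular_on:
  "finite E \<Longrightarrow> (\<And>x t. E2DCooc x t \<ge> 0) \<Longrightarrow>
     nonneg_monotone_submodular_on E (E2D E2DCooc tau s)"
  unfolding E2D_def by (rule coverage_nonneg_monotone_submodular_on)

lemma E2EPath_nonneg_monotone_submodular_on:
  "finite E \<Longrightarrow> (\<And>x y. E2ECooc x y \<ge> 0) \<Longrightarrow>
     nonneg_monotone_submodular_on E (E2EPath Ev E2ECooc Sub RE piRE)"
  unfolding E2EPath_def by (rule coverage_nonneg_monotone_submodular_on) (simp_all add: average_nonneg)

lemma E2DPath_nonneg_monotone_submodular_on:
  "finite E \<Longrightarrow> (\<And>x t. E2DCooc x t \<ge> 0) \<Longrightarrow>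
     nonneg_monotone_submodular_on E (E2DPath Ev E2DCooc Sub tau piTau)"
  unfolding E2DPath_def by (rule coverage_nonneg_monotone_submodular_on) (simp_all add: average_nonneg)

theorem theorem1:
  fixes Ev E :: "'ev set"
    and s :: 'ent
    and Sub RE :: "'ev \<Rightarrow> 'ent"
    and tau :: "'ev \<Rightarrow> real"
    and piRE :: "'ev \<Rightarrow> 'p"
    and piTau :: "'ev \<Rightarrow> 'q"
    and E2ECooc :: "'ent \<Rightarrow> 'ent \<Rightarrow> real"
    and E2DCooc :: "'ent \<Rightarrow> real \<Rightarrow> real"
    and GI :: "'ent \<Rightarrow> real"
    and lambda we1 we2 we3 wd1 wd2 :: real
    and f :: "'ev set \<Rightarrow> real"
  assumes "finite Ev" and "E \<subseteq> Ev"
    and "\<forall>e\<in>E. Sub e = s"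
    and "\<And>x y. E2ECooc x y \<ge> 0"
    and "\<And>x t. E2DCooc x t \<ge> 0"
    and "\<And>x. GI x \<ge> 0"
    and "0 \<le> lambda" "lambda \<le> 1"
    and "we1 \<ge> 0" "we2 \<ge> 0" "we3 \<ge> 0" "wd1 \<ge> 0" "wd2 \<ge> 0"
    and f_def: "\<And>T. f T =
        lambda * (we1 * E2E E2ECooc RE s T + we2 * E2EPath Ev E2ECooc Sub RE piRE T
                  + we3 * G2E GI RE T)
      + (1 - lambda) * (wd1 * E2D E2DCooc tau s T + wd2 * E2DPath Ev E2DCooc Sub tau piTau T)"
  shows "monotone_set_fun_on E f \<and> submodular_on E f \<and> (\<forall>T. T \<subseteq> E \<longrightarrow> f T \<ge> 0)"
proof -
  have E: "finite E" using assms(1,2) by (rule finite_subset[rotated])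
  have "nonneg_monotone_submodular_on E f"
    unfolding f_def[abs_def] using assms(4-13)
    by (intro nonneg_monotone_submodular_on_add nonneg_monotone_submodular_on_scale
          E2E_nonneg_monotone_submodular_on[OF E] E2EPath_nonneg_monotone_submodular_on[OF E]
          G2E_nonneg_monotone_submodular_on[OF E] E2D_nonneg_monotone_submodular_on[OF E]
          E2DPath_nonneg_monotone_submodular_on[OF E]) simp_all
  then show ?thesis unfolding nonneg_monotone_submodular_on_def .
qed

end
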